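(* Let $n\ge0$ and let $a\preccurlyeq b$ be vertices of $\square^n$ (i.e. subsets $a\subseteq b\subseteq\{1,\dots,n\}$). There is an isomorphism of preordered sets $\mathfrak{C}^{\square}_{path}(\square^n)(a,b)\to\Sigma_{b\setminus a}$, where $\Sigma_{b\setminus a}$ carries the weak Bruhat order $\leadsto_B$, and these isomorphisms are compatible with concatenation (for $a\preccurlyeq b\preccurlyeq c$, concatenation of paths corresponds to concatenation of sequences $\Sigma_{b\setminus a}\times\Sigma_{c\setminus b}\to\Sigma_{c\setminus a}$). Consequently the preorder $\leadsto$ on $\mathfrak{C}^{\square}_{path}(\square^n)(a,b)$ is a partial order, isomorphic to the weak Bruhat order.
   Context: Cubical sets: presheaves on the category $\square$ with objects $[1]^n$ and morphisms generated by faces $\partial_{i,\epsilon}$ (insert $\epsilon$ at coordinate $i$), degeneracies (delete a coordinate) and negative connections ($(x_i,x_{i+1})\mapsto\max(x_i,x_{i+1})$); $\square^n$ is representable, and its vertices are identified with subsets of $\{1,\dots,n\}$ ordered by inclusion $\preccurlyeq$. Paths: $I_m$ is $m$ copies of $\square^1$ glued end to start, with distinguished initial/terminal vertices. For $0\le k\le m-2$, $\mathbb{I}_{k,m}$ is $I_k$, $\square^2$, $I_{m-2-k}$ glued end to start (through the vertices $\emptyset$ and $\{1,2\}$ of $\square^2$); $s_{k,m},t_{k,m}:I_m\to\mathbb{I}_{k,m}$ are the identity on the first $k$ and last $m-2-k$ edges and send edges $k+1,k+2$ to $\emptyset\to\{2\}\to\{1,2\}$ (for $s$), resp. $\emptyset\to\{1\}\to\{1,2\}$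 (for $t$). For a cubical set $S$ with vertices $a,b$, $\mathfrak{C}^{\square}_{path}(S)(a,b)$ is the set of maps $\gamma:I_m\to S$ (any $m$) sending the initial vertex to $a$ and the terminal to $b$, modulo the equivalence relation generated by $\gamma\sim\gamma'$ when $\gamma=\gamma'\circ h$ for an endpoint-preserving $h:I_m\to I_{m'}$, preordered by the reflexive-transitive closure $\leadsto$ of $[F\circ s_{k,m}]\leadsto[F\circ t_{k,m}]$ for endpoint-preserving $F:\mathbb{I}_{k,m}\to S$. Composition is concatenation of paths. For a finite totally ordered set $A$ (here with order induced from $\{1,\dots,n\}$), $\Sigma_A$ is the set of sequences $(x_1,\dots,x_k)$ enumerating $A$ without repetition; the weak Bruhat order $\leadsto_B$ is the partial order generated by $(x_1,\dots,x_i,x_{i+1},\dots,x_k)\leadsto_B(x_1,\dots,x_{i+1},x_i,\dots,x_k)$ whenever $x_i>x_{i+1}$. *)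

theory Defs
  imports Main
begin

text \<open>A vertex of [1]^p is represented by the set of coordinates (among 1..p) equal to 1.
  A morphism [1]^p -> [1]^q is represented by its action on vertices, canonicalised to
  return the empty set outside the domain, so that equality of morphisms is equality of
  functions.\<close>

definition rst :: "nat \<Rightarrow> (nat set \<Rightarrow> nat set) \<Rightarrow> nat set \<Rightarrow> nat set" where
  "rst p f = (\<lambda>x. if x \<subseteq> {1..p} then f x else {})"

definition cmp :: "nat \<Rightarrow> (nat set \<Rightarrow> nat set) \<Rightarrow> (nat set \<Rightarrow> nat set) \<Rightarrow> nat set \<Rightarrow> nat set" where
  "cmp p g f = rst p (\<lambda>x. g (f x))"

text \<open>face: [1]^p -> [1]^(p+1), insert e at coordinate i\<close>
definition face :: "nat \<Rightarrow> nat \<Rightarrow> bool \<Rightarrow> nat set \<Rightarrow> nat set" where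
  "face p i e = rst p (\<lambda>x. {j \<in> x. j < i} \<union> (\<lambda>j. j + 1) ` {j \<in> x. j \<ge> i} \<union> (if e then {i} else {}))"

text \<open>degeneracy: [1]^(p+1) -> [1]^p, delete coordinate i\<close>
definition degen :: "nat \<Rightarrow> nat \<Rightarrow> nat set \<Rightarrow> nat set" where
  "degen p i = rst (Suc p) (\<lambda>x. {j \<in> x. j < i} \<union> (\<lambda>j. j - 1) ` {j \<in> x. j > i})"

text \<open>negative connection: [1]^(p+1) -> [1]^p, (x_i, x_(i+1)) |-> max x_i x_(i+1)\<close>
definition conn :: "nat \<Rightarrow> nat \<Rightarrow> nat set \<Rightarrow> nat set" where
  "conn p i = rst (Suc p) (\<lambda>x. {j \<in> x. j < i} \<union> (if i \<in> x \<or> Suc i \<in> x then {i} else {})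
                              \<union> (\<lambda>j. j - 1) ` {j \<in> x. j > Suc i})"

inductive cmor :: "nat \<Rightarrow> nat \<Rightarrow> (nat set \<Rightarrow> nat set) \<Rightarrow> bool" where
  cmor_id: "cmor p p (rst p id)"
| cmor_face: "1 \<le> i \<Longrightarrow> i \<le> Suc p \<Longrightarrow> cmor p (Suc p) (face p i e)"
| cmor_degen: "1 \<le> i \<Longrightarrow> i \<le> Suc p \<Longrightarrow> cmor (Suc p) p (degen p i)"
| cmor_conn: "1 \<le> i \<Longrightarrow> i \<le> p \<Longrightarrow> cmor (Suc p) p (conn p i)"
| cmor_comp: "cmor p q f \<Longrightarrow> cmor q r g \<Longrightarrow> cmor p r (cmp p g f)"

text \<open>p-cells of \<box>^n are morphisms [1]^p -> [1]^n; vertices are identified with subsets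
  of {1..n}; a 1-cell e goes from e {} to e {1}.\<close>

definition src :: "(nat set \<Rightarrow> nat set) \<Rightarrow> nat set" where "src e = e {}"
definition tgt :: "(nat set \<Rightarrow> nat set) \<Rightarrow> nat set" where "tgt e = e {1}"

definition dgn_cell :: "nat set \<Rightarrow> nat set \<Rightarrow> nat set" where
  "dgn_cell v = cmp 1 (rst 0 (\<lambda>_. v)) (degen 0 1)"

definition chain :: "('c \<Rightarrow> 'v) \<Rightarrow> ('c \<Rightarrow> 'v) \<Rightarrow> 'v \<Rightarrow> 'v \<Rightarrow> 'c list \<Rightarrow> bool" where
  "chain s t x y cs \<longleftrightarrow> (cs = [] \<longrightarrow> x = y) \<and>
     (cs \<noteq> [] \<longrightarrow> s (hd cs) = x \<and> t (last cs) = y \<and>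
        (\<forall>i. Suc i < length cs \<longrightarrow> t (cs ! i) = s (cs ! Suc i)))"

text \<open>A map I_m -> \<box>^n from a to b = m composable 1-cells (universal property of gluing).\<close>
definition is_path :: "nat \<Rightarrow> nat set \<Rightarrow> nat set \<Rightarrow> (nat set \<Rightarrow> nat set) list \<Rightarrow> bool" where
  "is_path n a b es \<longleftrightarrow> a \<subseteq> {1..n} \<and> (\<forall>e\<in>set es. cmor 1 n e) \<and> chain src tgt a b es"

text \<open>1-cells of I_m: degenerate cells at vertices 0..m, and the edges 1..m (edge j from j-1 to j).\<close>
datatype icell = IDeg nat | IEdge nat

fun isrc :: "icell \<Rightarrow> nat" where "isrc (IDeg j) = j" | "isrc (IEdge j) = j - 1"
fun itgt :: "icell \<Rightarrow> nat" where "itgt (IDeg j) = j" | "itgt (IEdge j) = j"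
fun ivalid :: "nat \<Rightarrow> icell \<Rightarrow> bool" where
  "ivalid m (IDeg j) \<longleftrightarrow> j \<le> m" | "ivalid m (IEdge j) \<longleftrightarrow> 1 \<le> j \<and> j \<le> m"

text \<open>endpoint-preserving map I_(length h) -> I_m'\<close>
definition imap :: "nat \<Rightarrow> icell list \<Rightarrow> bool" where
  "imap m' h \<longleftrightarrow> (\<forall>c\<in>set h. ivalid m' c) \<and> chain isrc itgt 0 m' h"

definition pvert :: "nat set \<Rightarrow> (nat set \<Rightarrow> nat set) list \<Rightarrow> nat \<Rightarrow> nat set" where
  "pvert a es j = (if j = 0 then a else tgt (es ! (j - 1)))"

text \<open>precomposition gamma o h on a 1-cell of I_m\<close>
fun icomp :: "nat set \<Rightarrow> (nat set \<Rightarrow> nat set) list \<Rightarrow> icell \<Rightarrow> nat set \<Rightarrow> nat set" where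
  "icomp a es (IDeg j) = dgn_cell (pvert a es j)"
| "icomp a es (IEdge j) = es ! (j - 1)"

definition path_rel0 :: "nat \<Rightarrow> nat set \<Rightarrow> nat set \<Rightarrow> (nat set \<Rightarrow> nat set) list \<Rightarrow> (nat set \<Rightarrow> nat set) list \<Rightarrow> bool" where
  "path_rel0 n a b x y \<longleftrightarrow> is_path n a b x \<and> is_path n a b y \<and>
     (\<exists>h. imap (length y) h \<and> x = map (icomp a y) h)"

definition pathEq :: "nat \<Rightarrow> nat set \<Rightarrow> nat set \<Rightarrow> (nat set \<Rightarrow> nat set) list \<Rightarrow> (nat set \<Rightarrow> nat set) list \<Rightarrow> bool" where
  "pathEq n a b = equivclp (path_rel0 n a b)"

definition pcls :: "nat \<Rightarrow> nat set \<Rightarrow> nat set \<Rightarrow> (nat set \<Rightarrow> nat set) list \<Rightarrow> (nat set \<Rightarrow> nat set) list set" where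
  "pcls n a b x = {y. pathEq n a b x y}"

definition Cpath :: "nat \<Rightarrow> nat set \<Rightarrow> nat set \<Rightarrow> (nat set \<Rightarrow> nat set) list set set" where
  "Cpath n a b = {x. is_path n a b x} // {(x, y). pathEq n a b x y}"

text \<open>generating relation [F o s_(k,m)] ~> [F o t_(k,m)], F : II_(k,m) -> \<box>^n given by
  k edges, a 2-cell c, and m-2-k edges (universal property of gluing).\<close>
definition leads1 :: "nat \<Rightarrow> nat set \<Rightarrow> nat set \<Rightarrow> (nat set \<Rightarrow> nat set) list \<Rightarrow> (nat set \<Rightarrow> nat set) list \<Rightarrow> bool" where
  "leads1 n a b x y \<longleftrightarrow> (\<exists>es1 c es2. is_path n a (c {}) es1 \<and> cmor 2 n c \<and> is_path n (c {1,2}) b es2 \<and>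
      pathEq n a b x (es1 @ [cmp 1 c (face 1 1 False), cmp 1 c (face 1 2 True)] @ es2) \<and>
      pathEq n a b y (es1 @ [cmp 1 c (face 1 2 False), cmp 1 c (face 1 1 True)] @ es2))"

definition leads :: "nat \<Rightarrow> nat set \<Rightarrow> nat set \<Rightarrow> (nat set \<Rightarrow> nat set) list set \<Rightarrow> (nat set \<Rightarrow> nat set) list set \<Rightarrow> bool" where
  "leads n a b X Y \<longleftrightarrow> (\<exists>x\<in>X. \<exists>y\<in>Y. (\<lambda>u v. leads1 n a b u v \<or> pathEq n a b u v)\<^sup>*\<^sup>* x y)"

definition Sigma_seq :: "nat set \<Rightarrow> nat list set" where
  "Sigma_seq A = {xs. distinct xs \<and> set xs = A}"

definition bstep :: "nat list \<Rightarrow> nat list \<Rightarrow> bool" where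
  "bstep xs ys \<longleftrightarrow> (\<exists>i. Suc i < length xs \<and> xs ! i > xs ! Suc i \<and>
      ys = xs[i := xs ! Suc i, Suc i := xs ! i])"

definition bruhat :: "nat list \<Rightarrow> nat list \<Rightarrow> bool" where
  "bruhat = bstep\<^sup>*\<^sup>*"

end

(*
  A cube morphism [1]^p -> [1]^q acts on vertices as x |-> C union phi(x inter S) with phi
  monotone: faces, degeneracies and connections do, and this form is stable under composition.
  Hence a 1-cell of the cube is degenerate or adds a single coordinate, and a path from a to b is
  determined, up to reparametrisation and degenerate cells, by the sequence of coordinates it
  adds, an enumeration of b - a; concatenation of paths concatenates these sequences. A 2-cell
  adds at most two coordinates i <= j, along its two boundary paths in the orders j, i and i, j,
  so every generating step of the preorder is trivial or a Bruhat step. Conversely the maps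
  x |-> v union phi(x) with phi strictly increasing are composites of faces; they realise every
  sequence by a path of edges and every Bruhat step by a square. Antisymmetry: the weight
  sum_k k * x_k strictly increases along Bruhat steps.
*)
theory Submission
  imports Defs
begin

section \<open>Vertex maps of cube morphisms\<close>

lemma rst_cong: "(\<And>x. x \<subseteq> {1..p} \<Longrightarrow> f x = g x) \<Longrightarrow> rst p f = rst p g"
  by (rule ext) (simp add: rst_def)

lemma rst_idem: "rst p (rst p f) = rst p f"
  by (rule ext) (simp add: rst_def)

lemma cmor_rst: "cmor p q f \<Longrightarrow> rst p f = f"
  by (induction rule: cmor.induct) (simp_all only: face_def degen_def conn_def cmp_def rst_idem)

definition shift_down :: "nat \<Rightarrow> nat \<Rightarrow> nat" where
  "shift_down c j = (if j < c then j else j - 1)"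

definition shift_up :: "nat \<Rightarrow> nat \<Rightarrow> nat" where
  "shift_up c j = (if j < c then j else Suc j)"

lemma face_apply: "y \<subseteq> {1..q} \<Longrightarrow> face q c e y = shift_up c ` y \<union> (if e then {c} else {})"
  by (auto simp: face_def rst_def shift_up_def image_iff)

lemma conn_image:
  "{j \<in> x. j < i} \<union> (if i \<in> x \<or> Suc i \<in> x then {i} else {}) \<union> (\<lambda>j. j - 1) ` {j \<in> x. j > Suc i}
   = shift_down (Suc i) ` x" (is "?L = ?R")
proof (intro set_eqI iffI)
  fix y assume "y \<in> ?L" then show "y \<in> ?R"
    by (auto simp: image_iff shift_down_def split: if_splits intro: bexI[where x="Suc i"] bexI[where x=i])
next
  fix y assume "y \<in> ?R"
  then obtain j where j: "j \<in> x" "y = shift_down (Suc i) j" by auto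
  consider "j < i" | "j = i" | "j = Suc i" | "j > Suc i" by linarith
  then show "y \<in> ?L" using j by cases (auto simp: shift_down_def)
qed

(* C is the set of output coordinates that are constantly 1; every other output coordinate k is the
   maximum of the input coordinates l in S with phi l = k. Because of the connections, phi is
   monotone but need not be injective. *)
definition cubical_map :: "nat \<Rightarrow> nat \<Rightarrow> (nat set \<Rightarrow> nat set) \<Rightarrow> bool" where
  "cubical_map p q f \<longleftrightarrow> (\<exists>C S \<phi>. C \<subseteq> {1..q} \<and> S \<subseteq> {1..p} \<and> \<phi> ` S \<subseteq> {1..q} \<and> mono_on S \<phi> \<and>
     (\<forall>x\<subseteq>{1..p}. f x = C \<union> \<phi> ` (x \<inter> S)))"

lemma cubical_mapI:
  assumes "C \<subseteq> {1..q}" "S \<subseteq> {1..p}" "\<phi> ` S \<subseteq> {1..q}" "mono_on S \<phi>"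
    and "\<And>x. x \<subseteq> {1..p} \<Longrightarrow> f x = C \<union> \<phi> ` (x \<inter> S)"
  shows "cubical_map p q f"
  unfolding cubical_map_def using assms by blast

lemma cubical_map_cmp:
  assumes f: "cubical_map p q f" and g: "cubical_map q r g"
  shows "cubical_map p r (cmp p g f)"
proof -
  obtain C S \<phi> where C: "C \<subseteq> {1..q}" and S: "S \<subseteq> {1..p}" "\<phi> ` S \<subseteq> {1..q}" "mono_on S \<phi>"
    and f_eq: "\<And>x. x \<subseteq> {1..p} \<Longrightarrow> f x = C \<union> \<phi> ` (x \<inter> S)"
    using f unfolding cubical_map_def by (elim exE conjE) metis
  obtain D T \<psi> where D: "D \<subseteq> {1..r}" and T: "T \<subseteq> {1..q}" "\<psi> ` T \<subseteq> {1..r}" "mono_on T \<psi>"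
    and g_eq: "\<And>y. y \<subseteq> {1..q} \<Longrightarrow> g y = D \<union> \<psi> ` (y \<inter> T)"
    using g unfolding cubical_map_def by (elim exE conjE) metis
  show ?thesis
  proof (rule cubical_mapI)
    show "D \<union> \<psi> ` (C \<inter> T) \<subseteq> {1..r}" using D T by auto
    show "{l \<in> S. \<phi> l \<in> T} \<subseteq> {1..p}" "(\<psi> \<circ> \<phi>) ` {l \<in> S. \<phi> l \<in> T} \<subseteq> {1..r}" using S T by auto
    show "mono_on {l \<in> S. \<phi> l \<in> T} (\<psi> \<circ> \<phi>)"
    proof (rule monotone_onI)
      fix l l' assume "l \<in> {l \<in> S. \<phi> l \<in> T}" "l' \<in> {l \<in> S. \<phi> l \<in> T}" "l \<le> l'"
      then show "(\<psi> \<circ> \<phi>) l \<le> (\<psi> \<circ> \<phi>) l'"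
        using monotone_onD[OF S(3)] monotone_onD[OF T(3)] by simp
    qed
    fix x assume x: "x \<subseteq> {1..p}"
    have "f x \<subseteq> {1..q}" using f_eq[OF x] C S(2) by auto
    then have "cmp p g f x = D \<union> \<psi> ` ((C \<union> \<phi> ` (x \<inter> S)) \<inter> T)"
      using x by (simp add: cmp_def rst_def g_eq f_eq)
    also have "\<dots> = (D \<union> \<psi> ` (C \<inter> T)) \<union> (\<psi> \<circ> \<phi>) ` (x \<inter> {l \<in> S. \<phi> l \<in> T})"
      by auto
    finally show "cmp p g f x = (D \<union> \<psi> ` (C \<inter> T)) \<union> (\<psi> \<circ> \<phi>) ` (x \<inter> {l \<in> S. \<phi> l \<in> T})" .
  qed
qed

lemma cmor_cubical_map: "cmor p q f \<Longrightarrow> cubical_map p q f"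
proof (induction rule: cmor.induct)
  case (cmor_id p)
  show ?case by (rule cubical_mapI[where C="{}" and S="{1..p}" and \<phi>=id]) (auto simp: rst_def monotone_on_def)
next
  case (cmor_face i p e)
  show ?case
  proof (rule cubical_mapI[where C="if e then {i} else {}" and S="{1..p}" and \<phi>="shift_up i"])
    fix x :: "nat set" assume "x \<subseteq> {1..p}"
    then show "face p i e x = (if e then {i} else {}) \<union> shift_up i ` (x \<inter> {1..p})"
      by (auto simp: face_apply Int_absorb2)
  qed (use cmor_face in \<open>auto simp: monotone_on_def shift_up_def\<close>)
next
  case (cmor_degen i p)
  show ?case
  proof (rule cubical_mapI[where C="{}" and S="{1..Suc p} - {i}" and \<phi>="shift_down i"])
    fix x :: "nat set" assume "x \<subseteq> {1..Suc p}"
    then show "degen p i x = {} \<union> shift_down i ` (x \<inter> ({1..Suc p} - {i}))"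
      by (auto simp: degen_def rst_def shift_down_def image_iff)
  qed (use cmor_degen in \<open>auto simp: monotone_on_def shift_down_def\<close>)
next
  case (cmor_conn i p)
  show ?case
  proof (rule cubical_mapI[where C="{}" and S="{1..Suc p}" and \<phi>="shift_down (Suc i)"])
    fix x :: "nat set" assume "x \<subseteq> {1..Suc p}"
    then show "conn p i x = {} \<union> shift_down (Suc i) ` (x \<inter> {1..Suc p})"
      using conn_image[of x i] by (simp add: conn_def rst_def Int_absorb2)
  qed (use cmor_conn in \<open>auto simp: monotone_on_def shift_down_def\<close>)
next
  case (cmor_comp p q f r g)
  show ?case using cmor_comp.IH by (rule cubical_map_cmp)
qed

section \<open>Strictly monotone embeddings are composites of faces\<close>

lemma strict_mono_on_interval_onto_id:
  fixes \<phi> :: "nat \<Rightarrow> nat"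
  assumes mono: "strict_mono_on {1..p} \<phi>" and onto: "\<phi> ` {1..p} = {1..m}" and l: "l \<in> {1..p}"
  shows "\<phi> l = l"
proof -
  have inj: "inj_on \<phi> {1..p}" using mono by (rule strict_mono_on_imp_inj_on)
  have mono': "\<phi> k \<le> \<phi> k'" if "k \<in> {1..p}" "k' \<in> {1..p}" "k \<le> k'" for k k'
    by (rule monotone_onD[OF strict_mono_on_imp_mono_on[OF mono] that])
  have rng: "\<phi> k \<in> {1..m}" if "k \<in> {1..p}" for k
    using imageI[OF that, of \<phi>] unfolding onto .
  have "p = m" using card_image[OF inj] onto by simp
  have "l = card (\<phi> ` {1..l})"
    using l by (subst card_image[OF inj_on_subset[OF inj]]) auto
  also have "\<dots> \<le> card {1..\<phi> l}"
  proof (rule card_mono)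
    show "\<phi> ` {1..l} \<subseteq> {1..\<phi> l}" using l rng mono' by (intro image_subsetI) fastforce
  qed simp
  finally have "l \<le> \<phi> l" by simp
  have "Suc p - l = card (\<phi> ` {l..p})"
    using l by (subst card_image[OF inj_on_subset[OF inj]]) auto
  also have "\<dots> \<le> card {\<phi> l..m}"
  proof (rule card_mono)
    show "\<phi> ` {l..p} \<subseteq> {\<phi> l..m}" using l rng mono' by (intro image_subsetI) fastforce
  qed simp
  finally have "Suc p - l \<le> Suc m - \<phi> l" by simp
  with \<open>l \<le> \<phi> l\<close> \<open>p = m\<close> rng[OF l] l show ?thesis by auto
qed

lemma shift_down_mem: "j \<in> {1..Suc q} \<Longrightarrow> c \<in> {1..Suc q} \<Longrightarrow> j \<noteq> c \<Longrightarrow> shift_down c j \<in> {1..q}"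
  by (auto simp: shift_down_def)

lemma shift_down_inj: "j \<noteq> c \<Longrightarrow> k \<noteq> c \<Longrightarrow> shift_down c j = shift_down c k \<Longrightarrow> j = k"
  by (auto simp: shift_down_def split: if_splits)

lemma shift_down_less: "j \<noteq> c \<Longrightarrow> k \<noteq> c \<Longrightarrow> j < k \<Longrightarrow> shift_down c j < shift_down c k"
  by (auto simp: shift_down_def)

lemma shift_up_down: "j \<noteq> c \<Longrightarrow> shift_up c (shift_down c j) = j"
  by (auto simp: shift_up_def shift_down_def)

lemma shift_up_down_image:
  assumes "c \<notin> A" shows "shift_up c ` shift_down c ` A = A"
proof -
  have "(\<lambda>j. shift_up c (shift_down c j)) ` A = (\<lambda>j. j) ` A"
    using assms by (intro image_cong refl) (metis shift_up_down)
  then show ?thesis by (simp add: image_image)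
qed

lemma face_shift_down_inverse:
  assumes "A \<subseteq> {1..Suc q}" "c \<in> {1..Suc q}"
  shows "face q c (c \<in> A) (shift_down c ` (A - {c})) = A"
proof -
  have "shift_down c ` (A - {c}) \<subseteq> {1..q}" using assms by (intro image_subsetI shift_down_mem) auto
  then have "face q c (c \<in> A) (shift_down c ` (A - {c})) = (A - {c}) \<union> (if c \<in> A then {c} else {})"
    by (simp add: face_apply shift_up_down_image)
  then show ?thesis by auto
qed

lemma strict_mono_on_shift_down:
  assumes "strict_mono_on A \<phi>" "c \<notin> \<phi> ` A"
  shows "strict_mono_on A (shift_down c \<circ> \<phi>)"
proof (rule strict_mono_onI)
  fix r s assume "r \<in> A" "s \<in> A" "r < s"
  moreover from this have "\<phi> r < \<phi> s" by (rule strict_mono_onD[OF assms(1)])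
  moreover have "\<phi> r \<noteq> c" "\<phi> s \<noteq> c" using assms(2) calculation by auto
  ultimately show "(shift_down c \<circ> \<phi>) r < (shift_down c \<circ> \<phi>) s" by (simp add: shift_down_less)
qed

lemma shift_down_image_subset:
  assumes "\<phi> ` A \<subseteq> {1..Suc q} - v" "c \<in> {1..Suc q}" "c \<notin> \<phi> ` A"
  shows "(shift_down c \<circ> \<phi>) ` A \<subseteq> {1..q} - shift_down c ` (v - {c})"
proof (rule image_subsetI)
  fix l assume "l \<in> A"
  then have l: "\<phi> l \<in> {1..Suc q} - v" "\<phi> l \<noteq> c" using assms(1,3) by blast+
  have "shift_down c (\<phi> l) \<notin> shift_down c ` (v - {c})"
  proof
    assume "shift_down c (\<phi> l) \<in> shift_down c ` (v - {c})"
    then obtain j where "j \<in> v - {c}" "shift_down c (\<phi> l) = shift_down c j" by auto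
    then show False using shift_down_inj[of "\<phi> l" c j] l by auto
  qed
  with l show "(shift_down c \<circ> \<phi>) l \<in> {1..q} - shift_down c ` (v - {c})"
    using assms(2) shift_down_mem by auto
qed

lemma cmor_strict_mono_embedding:
  fixes \<phi> :: "nat \<Rightarrow> nat"
  assumes "v \<subseteq> {1..q}" "strict_mono_on {1..p} \<phi>" "\<phi> ` {1..p} \<subseteq> {1..q} - v"
  shows "cmor p q (rst p (\<lambda>x. v \<union> \<phi> ` x))"
  using assms
proof (induction q arbitrary: v \<phi>)
  case 0
  then have "p = 0" "v = {}" by auto
  then have "rst 0 (\<lambda>x. v \<union> \<phi> ` x) = rst 0 id" by (intro rst_cong) auto
  then show ?case using cmor_id[of 0] \<open>p = 0\<close> by simp
next
  case (Suc q)
  show ?case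
  proof (cases "{1..Suc q} \<subseteq> \<phi> ` {1..p}")
    case True
    then have onto: "\<phi> ` {1..p} = {1..Suc q}" and "v = {}" using Suc.prems by auto
    have "p = Suc q"
      using card_image[OF strict_mono_on_imp_inj_on[OF Suc.prems(2)]] onto by simp
    moreover have "rst p (\<lambda>x. v \<union> \<phi> ` x) = rst p id"
    proof (rule rst_cong)
      fix x assume "x \<subseteq> {1..p}"
      then show "v \<union> \<phi> ` x = id x"
        using strict_mono_on_interval_onto_id[OF Suc.prems(2) onto] \<open>v = {}\<close> by (auto simp: image_iff subset_iff)
    qed
    ultimately show ?thesis using cmor_id by metis
  next
    case False
    \<comment> \<open>a coordinate c missed by \<phi> lets the map factor through the face inserting c\<close>
    then obtain c where c: "c \<in> {1..Suc q}" "c \<notin> \<phi> ` {1..p}" by blast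
    define v' where "v' = shift_down c ` (v - {c})"
    have "v' \<subseteq> {1..q}"
      unfolding v'_def using Suc.prems(1) c(1) by (intro image_subsetI shift_down_mem) auto
    then have "cmor p q (rst p (\<lambda>x. v' \<union> (shift_down c \<circ> \<phi>) ` x))"
      using Suc.IH strict_mono_on_shift_down[OF Suc.prems(2) c(2)]
        shift_down_image_subset[OF Suc.prems(3) c] unfolding v'_def by blast
    moreover have "cmor q (Suc q) (face q c (c \<in> v))" using c(1) by (intro cmor_face) auto
    ultimately have "cmor p (Suc q) (cmp p (face q c (c \<in> v)) (rst p (\<lambda>x. v' \<union> (shift_down c \<circ> \<phi>) ` x)))"
      by (rule cmor_comp)
    moreover have "cmp p (face q c (c \<in> v)) (rst p (\<lambda>x. v' \<union> (shift_down c \<circ> \<phi>) ` x))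
        = rst p (\<lambda>x. v \<union> \<phi> ` x)"
    proof (unfold cmp_def, rule rst_cong)
      fix x assume x: "x \<subseteq> {1..p}"
      then have "v' \<union> (shift_down c \<circ> \<phi>) ` x = shift_down c ` ((v \<union> \<phi> ` x) - {c})"
        using c(2) by (auto simp: v'_def)
      moreover have "v \<union> \<phi> ` x \<subseteq> {1..Suc q}" using Suc.prems(1,3) x by auto
      moreover have "c \<in> v \<union> \<phi> ` x \<longleftrightarrow> c \<in> v" using c(2) x by auto
      ultimately show "face q c (c \<in> v) (rst p (\<lambda>x. v' \<union> (shift_down c \<circ> \<phi>) ` x) x) = v \<union> \<phi> ` x"
        using x c(1) face_shift_down_inverse[of "v \<union> \<phi> ` x" q c] by (simp add: rst_def)
    qed
    ultimately show ?thesis by simp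
  qed
qed

section \<open>Cells of the cube\<close>

lemma cmor_cell_eq:
  assumes "cmor 1 n e" shows "e = rst 1 (\<lambda>x. if 1 \<in> x then tgt e else src e)"
proof -
  have "e = rst 1 e" using cmor_rst[OF assms] by simp
  also have "\<dots> = rst 1 (\<lambda>x. if 1 \<in> x then tgt e else src e)"
    by (rule rst_cong) (auto simp: src_def tgt_def subset_singleton_iff)
  finally show ?thesis .
qed

lemma cmor_cell_eqI: "cmor 1 n e \<Longrightarrow> cmor 1 n' e' \<Longrightarrow> src e = src e' \<Longrightarrow> tgt e = tgt e' \<Longrightarrow> e = e'"
  using cmor_cell_eq by metis

lemma dgn_cell_eq: "dgn_cell v = rst 1 (\<lambda>_. v)"
  unfolding dgn_cell_def cmp_def by (rule rst_cong) (auto simp: rst_def degen_def)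

lemma src_dgn_cell [simp]: "src (dgn_cell v) = v" and tgt_dgn_cell [simp]: "tgt (dgn_cell v) = v"
  by (simp_all add: dgn_cell_eq src_def tgt_def rst_def)

lemma cmor_cell_degenerate:
  assumes "cmor 1 n e" "src e = tgt e" shows "e = dgn_cell (src e)"
proof -
  have "e = rst 1 (\<lambda>x. if 1 \<in> x then tgt e else src e)" by (rule cmor_cell_eq[OF assms(1)])
  also have "\<dots> = rst 1 (\<lambda>_. src e)" using assms(2) by (intro arg_cong[where f="rst 1"] ext) simp
  also have "\<dots> = dgn_cell (src e)" by (simp add: dgn_cell_eq)
  finally show ?thesis .
qed

definition cell_flips :: "(nat set \<Rightarrow> nat set) \<Rightarrow> nat list" where
  "cell_flips e = sorted_list_of_set (tgt e - src e)"

lemma cell_flips_dgn_cell [simp]: "cell_flips (dgn_cell v) = []"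
  by (simp add: cell_flips_def)

lemma cmor_cell_cases:
  assumes "cmor 1 n e"
  obtains "tgt e = src e" "cell_flips e = []"
    | k where "k \<notin> src e" "tgt e = insert k (src e)" "cell_flips e = [k]"
proof -
  obtain C S \<phi> where "S \<subseteq> {1..1}" and e: "\<And>x. x \<subseteq> {1..1} \<Longrightarrow> e x = C \<union> \<phi> ` (x \<inter> S)"
    using cmor_cubical_map[OF assms] unfolding cubical_map_def by (elim exE conjE) metis
  then have "src e = C" "tgt e = C \<union> \<phi> ` S" by (auto simp: src_def tgt_def Int_absorb2)
  moreover have "\<phi> ` S = {} \<or> \<phi> ` S = {\<phi> 1}" using \<open>S \<subseteq> {1..1}\<close> by auto
  ultimately consider "tgt e = src e" | "\<phi> 1 \<notin> src e" "tgt e = insert (\<phi> 1) (src e)"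
    by (cases "\<phi> 1 \<in> C") (auto simp: insert_absorb)
  then show thesis
  proof cases
    case 1
    then show thesis by (intro that(1)) (simp_all add: cell_flips_def)
  next
    case 2
    then have "tgt e - src e = {\<phi> 1}" by auto
    with 2 show thesis by (intro that(2)[of "\<phi> 1"]) (simp_all add: cell_flips_def)
  qed
qed

lemma cmor_nondegenerate_cell:
  "cmor 1 n e \<Longrightarrow> src e \<noteq> tgt e \<Longrightarrow> \<exists>k. tgt e = insert k (src e) \<and> cell_flips e = [k]"
  by (cases rule: cmor_cell_cases) auto

definition edge :: "nat set \<Rightarrow> nat \<Rightarrow> nat set \<Rightarrow> nat set" where
  "edge v k = rst 1 (\<lambda>x. v \<union> (\<lambda>_. k) ` x)"

lemma src_edge [simp]: "src (edge v k) = v" and tgt_edge [simp]: "tgt (edge v k) = insert k v"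
  by (auto simp: edge_def src_def tgt_def rst_def)

lemma cmor_edge: "v \<subseteq> {1..n} \<Longrightarrow> k \<in> {1..n} \<Longrightarrow> k \<notin> v \<Longrightarrow> cmor 1 n (edge v k)"
  unfolding edge_def by (rule cmor_strict_mono_embedding) (auto simp: strict_mono_on_def)

lemma cell_flips_edge: "k \<notin> v \<Longrightarrow> cell_flips (edge v k) = [k]"
  by (simp add: cell_flips_def insert_Diff_if)

definition flips :: "(nat set \<Rightarrow> nat set) list \<Rightarrow> nat list" where
  "flips es = concat (map cell_flips es)"

lemma flips_simps [simp]:
  "flips [] = []" "flips (e # es) = cell_flips e @ flips es" "flips (es @ es') = flips es @ flips es'"
  by (simp_all add: flips_def)

(* The two boundary paths of a 2-cell, through its vertices {2} and {1}: the paths F o s and F o t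
   of the generating relation of leads1. *)
definition square_src_path :: "(nat set \<Rightarrow> nat set) \<Rightarrow> (nat set \<Rightarrow> nat set) list" where
  "square_src_path c = [cmp 1 c (face 1 1 False), cmp 1 c (face 1 2 True)]"

definition square_tgt_path :: "(nat set \<Rightarrow> nat set) \<Rightarrow> (nat set \<Rightarrow> nat set) list" where
  "square_tgt_path c = [cmp 1 c (face 1 2 False), cmp 1 c (face 1 1 True)]"

lemma face_1_values:
  "face 1 1 False {} = {}" "face 1 1 False {1} = {2}" "face 1 2 True {} = {2}" "face 1 2 True {1} = {1,2}"
  "face 1 2 False {} = {}" "face 1 2 False {1} = {1}" "face 1 1 True {} = {1}" "face 1 1 True {1} = {1,2}"
  by (auto simp: face_apply shift_up_def)

lemma src_cmp: "src (cmp 1 c f) = c (f {})" and tgt_cmp: "tgt (cmp 1 c f) = c (f {1})"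
  by (simp_all add: cmp_def rst_def src_def tgt_def)

lemma flips_square_paths:
  "flips (square_src_path c) = sorted_list_of_set (c {2} - c {}) @ sorted_list_of_set (c {1,2} - c {2})"
  "flips (square_tgt_path c) = sorted_list_of_set (c {1} - c {}) @ sorted_list_of_set (c {1,2} - c {1})"
  unfolding square_src_path_def square_tgt_path_def flips_simps cell_flips_def src_cmp tgt_cmp face_1_values
  by simp_all

lemma sorted_list_of_set_two_orders:
  fixes u w :: nat
  assumes "B1 \<subseteq> {u}" "B2 \<subseteq> {w}" "u \<le> w"
  shows "sorted_list_of_set B2 @ sorted_list_of_set (B1 - B2) = sorted_list_of_set B1 @ sorted_list_of_set (B2 - B1)
    \<or> (\<exists>i j. i < j \<and> sorted_list_of_set B2 @ sorted_list_of_set (B1 - B2) = [j, i]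
              \<and> sorted_list_of_set B1 @ sorted_list_of_set (B2 - B1) = [i, j])"
proof -
  have "B1 = {} \<or> B1 = {u}" "B2 = {} \<or> B2 = {w}" using assms(1,2) by auto
  then show ?thesis using assms(3) by (cases "u = w"; elim disjE) auto
qed

lemma cmor_square_flips:
  assumes "cmor 2 n c"
  shows "flips (square_src_path c) = flips (square_tgt_path c)
    \<or> (\<exists>i j. i < j \<and> flips (square_src_path c) = [j, i] \<and> flips (square_tgt_path c) = [i, j])"
proof -
  obtain C S \<phi> where S: "S \<subseteq> {1..2}" "mono_on S \<phi>" and c: "\<And>x. x \<subseteq> {1..2} \<Longrightarrow> c x = C \<union> \<phi> ` (x \<inter> S)"
    using cmor_cubical_map[OF assms] unfolding cubical_map_def by (elim exE conjE) metis
  define u where "u = (if 1 \<in> S then \<phi> 1 else 0)"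
  define w where "w = (if 2 \<in> S then \<phi> 2 else u)"
  define B1 where "B1 = \<phi> ` ({1} \<inter> S) - C"
  define B2 where "B2 = \<phi> ` ({2} \<inter> S) - C"
  have "c {} = C" "c {1} = C \<union> B1" "c {2} = C \<union> B2" "c {1,2} = C \<union> B1 \<union> B2"
    by (auto simp: c B1_def B2_def)
  then have "flips (square_src_path c) = sorted_list_of_set B2 @ sorted_list_of_set (B1 - B2)"
    "flips (square_tgt_path c) = sorted_list_of_set B1 @ sorted_list_of_set (B2 - B1)"
    by (auto simp: flips_square_paths B1_def B2_def Un_Diff intro!: arg_cong[where f=sorted_list_of_set])
  moreover have "B1 \<subseteq> {u}" "B2 \<subseteq> {w}" by (auto simp: B1_def B2_def u_def w_def)
  moreover have "u \<le> w" using monotone_onD[OF S(2), of 1 2] by (auto simp: u_def w_def)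
  ultimately show ?thesis using sorted_list_of_set_two_orders by presburger
qed

definition square :: "nat set \<Rightarrow> nat \<Rightarrow> nat \<Rightarrow> nat set \<Rightarrow> nat set" where
  "square v i j = rst 2 (\<lambda>x. v \<union> (\<lambda>l. if l = 1 then i else j) ` x)"

lemma cmor_square:
  assumes "v \<subseteq> {1..n}" "i \<in> {1..n} - v" "j \<in> {1..n} - v" "i < j"
  shows "cmor 2 n (square v i j)"
  unfolding square_def
proof (rule cmor_strict_mono_embedding)
  show "strict_mono_on {1..2} (\<lambda>l::nat. if l = 1 then i else j)"
    using assms(4) by (auto simp: strict_mono_on_def)
qed (use assms in auto)

lemma square_boundary_paths:
  assumes "v \<subseteq> {1..n}" "i \<in> {1..n} - v" "j \<in> {1..n} - v" "i < j"
  shows "square_src_path (square v i j) = [edge v j, edge (insert j v) i]"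
    and "square_tgt_path (square v i j) = [edge v i, edge (insert i v) j]"
proof -
  have face: "cmor 1 2 (face 1 l e)" if "l \<in> {1,2}" for l e
    using cmor_face[of l 1 e] that unfolding Suc_1 by auto
  have face_cell: "cmor 1 n (cmp 1 (square v i j) (face 1 l e))" if "l \<in> {1,2}" for l e
    using cmor_comp[OF face[OF that] cmor_square[OF assms]] .
  have square_values: "square v i j {} = v" "square v i j {1} = insert i v" "square v i j {2} = insert j v"
    "square v i j {1,2} = insert i (insert j v)"
    using assms(4) by (auto simp: square_def rst_def)
  have cell_eq: "cmp 1 (square v i j) (face 1 l e) = edge w k"
    if "l \<in> {1,2}" "w \<subseteq> {1..n}" "k \<in> {1..n}" "k \<notin> w"
      "square v i j (face 1 l e {}) = w" "square v i j (face 1 l e {1}) = insert k w" for l e w k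
  proof (rule cmor_cell_eqI[OF face_cell[OF that(1)] cmor_edge[OF that(2-4)]])
    show "src (cmp 1 (square v i j) (face 1 l e)) = src (edge w k)"
      unfolding src_cmp src_edge by (rule that(5))
    show "tgt (cmp 1 (square v i j) (face 1 l e)) = tgt (edge w k)"
      unfolding tgt_cmp tgt_edge by (rule that(6))
  qed
  have "cmp 1 (square v i j) (face 1 1 False) = edge v j"
    "cmp 1 (square v i j) (face 1 2 True) = edge (insert j v) i"
    "cmp 1 (square v i j) (face 1 2 False) = edge v i"
    "cmp 1 (square v i j) (face 1 1 True) = edge (insert i v) j"
    \<comment> \<open>One_nat_def would rewrite the numeral 1 and block face_1_values\<close>
    using assms by (auto intro!: cell_eq simp del: One_nat_def simp: face_1_values square_values insert_commute)
  then show "square_src_path (square v i j) = [edge v j, edge (insert j v) i]"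
    and "square_tgt_path (square v i j) = [edge v i, edge (insert i v) j]"
    unfolding square_src_path_def square_tgt_path_def by simp_all
qed

section \<open>Paths up to equivalence are classified by their flips\<close>

lemma chain_Nil [simp]: "chain s t x y [] \<longleftrightarrow> x = y"
  by (simp add: chain_def)

lemma chain_Cons [simp]: "chain s t x y (c # cs) \<longleftrightarrow> s c = x \<and> chain s t (t c) y cs"
  by (cases cs) (auto simp: chain_def All_less_Suc2)

lemma flips_Sigma_seq:
  "(\<forall>e\<in>set es. cmor 1 n e) \<Longrightarrow> chain src tgt v b es \<Longrightarrow> flips es \<in> Sigma_seq (b - v) \<and> v \<subseteq> b"
proof (induction es arbitrary: v)
  case Nil
  then show ?case by (simp add: Sigma_seq_def)
next
  case (Cons e es)
  then have IH: "flips es \<in> Sigma_seq (b - tgt e)" "tgt e \<subseteq> b" and "src e = v" by auto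
  from Cons.prems(1) have "cmor 1 n e" by simp
  then show ?case
  proof (cases rule: cmor_cell_cases)
    case 1
    then show ?thesis using IH \<open>src e = v\<close> by simp
  next
    case (2 k)
    then show ?thesis using IH \<open>src e = v\<close> by (auto simp: Sigma_seq_def)
  qed
qed

definition drop_degenerate :: "(nat set \<Rightarrow> nat set) list \<Rightarrow> (nat set \<Rightarrow> nat set) list" where
  "drop_degenerate es = filter (\<lambda>e. src e \<noteq> tgt e) es"

lemma drop_degenerate_simps [simp]:
  "drop_degenerate [] = []"
  "drop_degenerate (e # es) = (if src e = tgt e then drop_degenerate es else e # drop_degenerate es)"
  by (simp_all add: drop_degenerate_def)

lemma chain_drop_degenerate: "chain src tgt v b es \<Longrightarrow> chain src tgt v b (drop_degenerate es)"
  by (induction es arbitrary: v) auto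

lemma flips_drop_degenerate: "flips (drop_degenerate es) = flips es"
  by (induction es) (auto simp: cell_flips_def)

lemma is_path_drop_degenerate: "is_path n a b es \<Longrightarrow> is_path n a b (drop_degenerate es)"
  using chain_drop_degenerate[of a b es] unfolding is_path_def
  by (metis filter_is_subset drop_degenerate_def subsetD)

(* The endpoint-preserving map h with es = drop_degenerate es o h: degenerate cells are sent to
   degenerate cells, the others to successive edges. *)
fun collapse_map :: "nat \<Rightarrow> (nat set \<Rightarrow> nat set) list \<Rightarrow> icell list" where
  "collapse_map j [] = []"
| "collapse_map j (e # es) =
    (if src e = tgt e then IDeg j # collapse_map j es else IEdge (Suc j) # collapse_map (Suc j) es)"

lemma collapse_map_factors:
  "\<forall>e\<in>set es. cmor 1 n e \<Longrightarrow> chain src tgt v b es \<Longrightarrow> drop j ys = drop_degenerate es \<Longrightarrow>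
   j \<le> length ys \<Longrightarrow> pvert a ys j = v \<Longrightarrow>
   map (icomp a ys) (collapse_map j es) = es \<and> (\<forall>c\<in>set (collapse_map j es). ivalid (length ys) c) \<and>
   chain isrc itgt j (length ys) (collapse_map j es)"
proof (induction es arbitrary: j v)
  case (Cons e es)
  have e: "cmor 1 n e" "src e = v" and es: "\<forall>e\<in>set es. cmor 1 n e" "chain src tgt (tgt e) b es"
    using Cons.prems(1,2) by auto
  show ?case
  proof (cases "src e = tgt e")
    case True
    then have "icomp a ys (IDeg j) = e" using cmor_cell_degenerate[OF e(1)] e(2) Cons.prems(5) by simp
    moreover have "drop j ys = drop_degenerate es" using Cons.prems(3) True by simp
    ultimately show ?thesis using Cons.IH[OF es] Cons.prems(4,5) e(2) True by simp
  next
    case False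
    then have "drop j ys = e # drop_degenerate es" using Cons.prems(3) by simp
    then have j: "j < length ys" "ys ! j = e" "drop (Suc j) ys = drop_degenerate es"
      by (metis Cons_nth_drop_Suc drop_all list.distinct(1) list.inject not_le_imp_less)+
    then have "pvert a ys (Suc j) = tgt e" by (simp add: pvert_def)
    then show ?thesis using Cons.IH[OF es j(3)] j False e(2) by simp
  qed
qed simp

lemma path_rel0_drop_degenerate:
  assumes "is_path n a b es" shows "path_rel0 n a b es (drop_degenerate es)"
proof -
  have "map (icomp a (drop_degenerate es)) (collapse_map 0 es) = es \<and>
      imap (length (drop_degenerate es)) (collapse_map 0 es)"
    using collapse_map_factors[of es n a b 0 "drop_degenerate es" a] assms
    by (simp add: is_path_def imap_def pvert_def)
  then show ?thesis using assms is_path_drop_degenerate unfolding path_rel0_def by metis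
qed

lemma flips_icomp:
  "chain isrc itgt j (length ys) h \<Longrightarrow> \<forall>c\<in>set h. ivalid (length ys) c \<Longrightarrow>
   flips (map (icomp a ys) h) = flips (drop j ys)"
proof (induction h arbitrary: j)
  case (Cons c h)
  show ?case
  proof (cases c)
    case (IDeg j')
    then have "chain isrc itgt j (length ys) h" "\<forall>c\<in>set h. ivalid (length ys) c"
      using Cons.prems by auto
    then show ?thesis using Cons.IH IDeg by simp
  next
    case (IEdge j')
    then have "j' = Suc j" "j < length ys" using Cons.prems by auto
    then have "drop j ys = ys ! j # drop (Suc j) ys" by (simp add: Cons_nth_drop_Suc)
    then show ?thesis using Cons IEdge \<open>j' = Suc j\<close> by simp
  qed
qed simp

lemma flips_path_rel0: "path_rel0 n a b xs ys \<Longrightarrow> flips xs = flips ys"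
  unfolding path_rel0_def imap_def using flips_icomp[of 0 ys _ a] by auto

lemma flips_pathEq: "pathEq n a b xs ys \<Longrightarrow> flips xs = flips ys"
  unfolding pathEq_def by (induction rule: equivclp_induct) (auto dest: flips_path_rel0)

lemma nondegenerate_paths_eqI:
  "\<forall>e\<in>set xs. cmor 1 n e \<and> src e \<noteq> tgt e \<Longrightarrow> \<forall>e\<in>set ys. cmor 1 n e \<and> src e \<noteq> tgt e \<Longrightarrow>
   chain src tgt v b xs \<Longrightarrow> chain src tgt v b' ys \<Longrightarrow> flips xs = flips ys \<Longrightarrow> xs = ys"
proof (induction xs arbitrary: ys v)
  case Nil
  show ?case
  proof (cases ys)
    case (Cons e' ys')
    then have "cmor 1 n e'" "src e' \<noteq> tgt e'" using Nil.prems(2) by auto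
    then obtain k where "cell_flips e' = [k]" using cmor_nondegenerate_cell by blast
    then show ?thesis using Nil.prems(5) Cons by simp
  qed simp
next
  case (Cons e xs)
  from Cons.prems(1) have e: "cmor 1 n e" "src e \<noteq> tgt e" by auto
  then obtain k where k: "tgt e = insert k (src e)" "cell_flips e = [k]"
    using cmor_nondegenerate_cell by blast
  show ?case
  proof (cases ys)
    case Nil
    then show ?thesis using Cons.prems(5) k by simp
  next
    case (Cons e' ys')
    with Cons.prems(2) have e': "cmor 1 n e'" "src e' \<noteq> tgt e'" by auto
    then obtain k' where k': "tgt e' = insert k' (src e')" "cell_flips e' = [k']"
      using cmor_nondegenerate_cell by blast
    have "k = k'" "flips xs = flips ys'" using Cons.prems(5) \<open>ys = e' # ys'\<close> k k' by auto
    moreover have "src e = v" "src e' = v" using Cons.prems(3,4) \<open>ys = e' # ys'\<close> by auto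
    ultimately have "e = e'" using cmor_cell_eqI[OF e(1) e'(1)] k k' by simp
    moreover have "xs = ys'"
      using Cons.IH[of ys' "tgt e"] Cons.prems \<open>ys = e' # ys'\<close> \<open>e = e'\<close> \<open>flips xs = flips ys'\<close> by auto
    ultimately show ?thesis using \<open>ys = e' # ys'\<close> by simp
  qed
qed

lemma pathEq_of_flips_eq:
  assumes xs: "is_path n a b xs" and ys: "is_path n a b ys" and "flips xs = flips ys"
  shows "pathEq n a b xs ys"
proof -
  have "drop_degenerate xs = drop_degenerate ys"
  proof (rule nondegenerate_paths_eqI)
    show "\<forall>e\<in>set (drop_degenerate xs). cmor 1 n e \<and> src e \<noteq> tgt e"
      "\<forall>e\<in>set (drop_degenerate ys). cmor 1 n e \<and> src e \<noteq> tgt e"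
      using xs ys by (auto simp: is_path_def drop_degenerate_def)
    show "chain src tgt a b (drop_degenerate xs)" "chain src tgt a b (drop_degenerate ys)"
      using xs ys by (simp_all add: is_path_def chain_drop_degenerate)
    show "flips (drop_degenerate xs) = flips (drop_degenerate ys)"
      using \<open>flips xs = flips ys\<close> by (simp add: flips_drop_degenerate)
  qed
  moreover have "path_rel0 n a b xs (drop_degenerate xs)" "path_rel0 n a b ys (drop_degenerate ys)"
    using path_rel0_drop_degenerate xs ys by auto
  ultimately show ?thesis
    unfolding pathEq_def by (metis equivclp_sym equivclp_trans r_into_equivclp)
qed

fun edge_path :: "nat set \<Rightarrow> nat list \<Rightarrow> (nat set \<Rightarrow> nat set) list" where
  "edge_path v [] = []"
| "edge_path v (k # ks) = edge v k # edge_path (insert k v) ks"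

lemma edge_path_append: "edge_path v (ks @ ks') = edge_path v ks @ edge_path (v \<union> set ks) ks'"
  by (induction ks arbitrary: v) auto

lemma edge_path_is_path:
  "v \<subseteq> {1..n} \<Longrightarrow> distinct ks \<Longrightarrow> set ks \<subseteq> {1..n} - v \<Longrightarrow>
   is_path n v (v \<union> set ks) (edge_path v ks) \<and> flips (edge_path v ks) = ks"
proof (induction ks arbitrary: v)
  case Nil
  then show ?case by (simp add: is_path_def)
next
  case (Cons k ks)
  have "is_path n (insert k v) (insert k v \<union> set ks) (edge_path (insert k v) ks) \<and>
      flips (edge_path (insert k v) ks) = ks"
    using Cons.prems by (intro Cons.IH) auto
  moreover have "cmor 1 n (edge v k)" using Cons.prems by (intro cmor_edge) auto
  ultimately show ?case using Cons.prems by (auto simp: is_path_def cell_flips_edge)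
qed

lemma edge_path_Sigma_seq:
  assumes "a \<subseteq> b" "b \<subseteq> {1..n}" "ks \<in> Sigma_seq (b - a)"
  shows "is_path n a b (edge_path a ks) \<and> flips (edge_path a ks) = ks"
proof -
  have "a \<union> set ks = b" using assms by (auto simp: Sigma_seq_def)
  then show ?thesis using edge_path_is_path[of a n ks] assms by (auto simp: Sigma_seq_def)
qed

section \<open>The weak Bruhat order\<close>

lemma bstep_iff_swap: "bstep xs ys \<longleftrightarrow> (\<exists>p q i j. i < j \<and> xs = p @ [j, i] @ q \<and> ys = p @ [i, j] @ q)"
proof
  assume "bstep xs ys"
  then obtain k where k: "Suc k < length xs" "xs ! k > xs ! Suc k" "ys = xs[k := xs ! Suc k, Suc k := xs ! k]"
    unfolding bstep_def by blast
  define p where "p = take k xs"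
  define q where "q = drop (Suc (Suc k)) xs"
  have "xs = take k xs @ drop k xs" by simp
  also have "drop k xs = xs ! k # xs ! Suc k # q"
    using k(1) by (simp add: q_def Cons_nth_drop_Suc)
  finally have xs: "xs = p @ [xs ! k, xs ! Suc k] @ q" by (simp add: p_def)
  have "length p = k" using k(1) by (simp add: p_def)
  have "ys = (p @ [xs ! k, xs ! Suc k] @ q)[k := xs ! Suc k, Suc k := xs ! k]" using k(3) xs by metis
  also have "\<dots> = p @ [xs ! Suc k, xs ! k] @ q" using \<open>length p = k\<close> by (simp add: list_update_append)
  finally have "ys = p @ [xs ! Suc k, xs ! k] @ q" .
  with xs k(2) show "\<exists>p q i j. i < j \<and> xs = p @ [j, i] @ q \<and> ys = p @ [i, j] @ q" by blast
next
  assume "\<exists>p q i j. i < j \<and> xs = p @ [j, i] @ q \<and> ys = p @ [i, j] @ q"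
  then obtain p q i j where "i < j" "xs = p @ [j, i] @ q" "ys = p @ [i, j] @ q" by blast
  then show "bstep xs ys" unfolding bstep_def
    by (intro exI[of _ "length p"]) (simp add: nth_append list_update_append)
qed

fun weight :: "nat \<Rightarrow> nat list \<Rightarrow> nat" where
  "weight k [] = 0"
| "weight k (x # xs) = k * x + weight (Suc k) xs"

lemma weight_append: "weight k (xs @ ys) = weight k xs + weight (k + length xs) ys"
  by (induction xs arbitrary: k) auto

lemma bstep_weight_less: "bstep xs ys \<Longrightarrow> weight 0 xs < weight 0 ys"
proof -
  assume "bstep xs ys"
  then obtain p q i j where "i < j" "xs = p @ [j, i] @ q" "ys = p @ [i, j] @ q"
    unfolding bstep_iff_swap by blast
  moreover from \<open>i < j\<close> have "length p * j + Suc (length p) * i < length p * i + Suc (length p) * j"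
    by simp
  ultimately show ?thesis by (simp add: weight_append)
qed

lemma bruhat_weight: "bruhat xs ys \<Longrightarrow> xs = ys \<or> weight 0 xs < weight 0 ys"
  unfolding bruhat_def by (induction rule: rtranclp_induct) (auto dest: bstep_weight_less)

lemma bruhat_antisym: "bruhat xs ys \<Longrightarrow> bruhat ys xs \<Longrightarrow> xs = ys"
  using bruhat_weight[of xs ys] bruhat_weight[of ys xs] by auto

lemma bstep_Sigma_seq: "bstep xs ys \<Longrightarrow> xs \<in> Sigma_seq A \<Longrightarrow> ys \<in> Sigma_seq A"
  unfolding bstep_iff_swap Sigma_seq_def by auto

lemma bruhat_Sigma_seq: "bruhat xs ys \<Longrightarrow> xs \<in> Sigma_seq A \<Longrightarrow> ys \<in> Sigma_seq A"
  unfolding bruhat_def by (induction rule: rtranclp_induct) (auto dest: bstep_Sigma_seq)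

section \<open>The preorder on path classes\<close>

lemma leads1_flips:
  assumes "leads1 n a b xs ys"
  shows "flips xs = flips ys \<or> bstep (flips xs) (flips ys)"
proof -
  obtain es1 c es2 where c: "cmor 2 n c"
    and "pathEq n a b xs (es1 @ square_src_path c @ es2)" "pathEq n a b ys (es1 @ square_tgt_path c @ es2)"
    using assms unfolding leads1_def square_src_path_def[symmetric] square_tgt_path_def[symmetric] by blast
  then have flips_eq: "flips xs = flips es1 @ flips (square_src_path c) @ flips es2"
    "flips ys = flips es1 @ flips (square_tgt_path c) @ flips es2"
    by (simp_all add: flips_pathEq)
  from cmor_square_flips[OF c] show ?thesis
  proof
    assume "\<exists>i j. i < j \<and> flips (square_src_path c) = [j, i] \<and> flips (square_tgt_path c) = [i, j]"
    then have "bstep (flips xs) (flips ys)"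
      unfolding bstep_iff_swap flips_eq by (intro exI[of _ "flips es1"] exI[of _ "flips es2"]) auto
    then show ?thesis ..
  qed (simp add: flips_eq)
qed

lemma bstep_leads1:
  assumes ab: "a \<subseteq> b" "b \<subseteq> {1..n}" and ks: "ks \<in> Sigma_seq (b - a)" and "bstep ks ks'"
  shows "leads1 n a b (edge_path a ks) (edge_path a ks')"
proof -
  obtain p q i j where "i < j" and ks_eq: "ks = p @ [j, i] @ q" and ks'_eq: "ks' = p @ [i, j] @ q"
    using \<open>bstep ks ks'\<close> unfolding bstep_iff_swap by blast
  define v where "v = a \<union> set p"
  have ks_set: "distinct ks" "set ks = b - a" using ks by (auto simp: Sigma_seq_def)
  have v: "v \<subseteq> {1..n}" "i \<in> {1..n} - v" "j \<in> {1..n} - v"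
    using ks_set ab by (auto simp: v_def ks_eq)
  have "is_path n a v (edge_path a p)"
    using edge_path_is_path[of a n p] ks_set ab by (auto simp: v_def ks_eq)
  moreover have "is_path n (insert i (insert j v)) b (edge_path (insert i (insert j v)) q)"
  proof -
    have q: "insert i (insert j v) \<subseteq> {1..n}" "distinct q" "set q \<subseteq> {1..n} - insert i (insert j v)"
      "insert i (insert j v) \<union> set q = b"
      using ks_set ab v by (auto simp: v_def ks_eq)
    then show ?thesis using edge_path_is_path[OF q(1-3)] by simp
  qed
  moreover have "edge_path a ks = edge_path a p @ square_src_path (square v i j) @ edge_path (insert i (insert j v)) q"
    "edge_path a ks' = edge_path a p @ square_tgt_path (square v i j) @ edge_path (insert i (insert j v)) q"
    using square_boundary_paths[OF v \<open>i < j\<close>]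
    by (simp_all add: ks_eq ks'_eq edge_path_append v_def insert_commute)
  moreover have "cmor 2 n (square v i j)" using cmor_square[OF v \<open>i < j\<close>] .
  moreover have "square v i j {} = v" "square v i j {1,2} = insert i (insert j v)"
    using \<open>i < j\<close> by (auto simp: square_def rst_def)
  ultimately show ?thesis
    unfolding leads1_def square_src_path_def[symmetric] square_tgt_path_def[symmetric] pathEq_def
    by (intro exI[of _ "edge_path a p"] exI[of _ "square v i j"] exI[of _ "edge_path (insert i (insert j v)) q"])
       (simp del: One_nat_def)
qed

lemma leads_closure_bruhat:
  "(\<lambda>u v. leads1 n a b u v \<or> pathEq n a b u v)\<^sup>*\<^sup>* xs ys \<Longrightarrow> bruhat (flips xs) (flips ys)"
  unfolding bruhat_def
  by (induction rule: rtranclp_induct) (auto dest: leads1_flips flips_pathEq)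

lemma bruhat_leads_closure:
  assumes ab: "a \<subseteq> b" "b \<subseteq> {1..n}"
  shows "bruhat ks ks' \<Longrightarrow> ks \<in> Sigma_seq (b - a) \<Longrightarrow>
    (\<lambda>u v. leads1 n a b u v \<or> pathEq n a b u v)\<^sup>*\<^sup>* (edge_path a ks) (edge_path a ks')"
  unfolding bruhat_def
proof (induction rule: rtranclp_induct)
  case (step ks' ks'')
  then have "ks' \<in> Sigma_seq (b - a)" using bruhat_Sigma_seq unfolding bruhat_def by blast
  then have "leads1 n a b (edge_path a ks') (edge_path a ks'')" using bstep_leads1[OF ab] step(2) by blast
  then show ?case using step by (simp add: rtranclp.rtrancl_into_rtrancl)
qed simp

lemma Cpath_iff: "X \<in> Cpath n a b \<longleftrightarrow> (\<exists>xs. is_path n a b xs \<and> X = pcls n a b xs)"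
  unfolding Cpath_def quotient_def pcls_def by auto

lemma pcls_self: "xs \<in> pcls n a b xs"
  by (simp add: pcls_def pathEq_def)

lemma pcls_eqI: "pathEq n a b xs ys \<Longrightarrow> pcls n a b xs = pcls n a b ys"
  unfolding pcls_def pathEq_def by (auto intro: equivclp_trans equivclp_sym)

lemma flips_pcls: "ys \<in> pcls n a b xs \<Longrightarrow> flips ys = flips xs"
  unfolding pcls_def using flips_pathEq by fastforce

definition class_flips :: "(nat set \<Rightarrow> nat set) list set \<Rightarrow> nat list" where
  "class_flips X = flips (SOME xs. xs \<in> X)"

lemma class_flips_pcls [simp]: "class_flips (pcls n a b xs) = flips xs"
proof -
  have "(SOME ys. ys \<in> pcls n a b xs) \<in> pcls n a b xs" by (rule someI[of _ xs]) (rule pcls_self)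
  then show ?thesis by (simp add: class_flips_def flips_pcls)
qed

lemma edge_path_in_pcls:
  assumes "b \<subseteq> {1..n}" "is_path n a b xs"
  shows "edge_path a (flips xs) \<in> pcls n a b xs"
proof -
  have "flips xs \<in> Sigma_seq (b - a)" "a \<subseteq> b"
    using flips_Sigma_seq[of xs n a b] assms(2) by (auto simp: is_path_def)
  then have "is_path n a b (edge_path a (flips xs))" "flips (edge_path a (flips xs)) = flips xs"
    using edge_path_Sigma_seq assms(1) by blast+
  then show ?thesis using pathEq_of_flips_eq[OF assms(2)] by (simp add: pcls_def)
qed

lemma class_flips_bij_betw:
  assumes ab: "a \<subseteq> b" "b \<subseteq> {1..n}"
  shows "bij_betw class_flips (Cpath n a b) (Sigma_seq (b - a))"
proof (rule bij_betw_imageI)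
  show "inj_on class_flips (Cpath n a b)"
  proof (rule inj_onI)
    fix X Y assume "X \<in> Cpath n a b" "Y \<in> Cpath n a b" "class_flips X = class_flips Y"
    then obtain xs ys where "is_path n a b xs" "is_path n a b ys" "flips xs = flips ys"
      and "X = pcls n a b xs" "Y = pcls n a b ys" unfolding Cpath_iff by auto
    then show "X = Y" using pathEq_of_flips_eq pcls_eqI by metis
  qed
  show "class_flips ` Cpath n a b = Sigma_seq (b - a)"
  proof
    show "class_flips ` Cpath n a b \<subseteq> Sigma_seq (b - a)"
      using flips_Sigma_seq by (auto simp: Cpath_iff is_path_def)
    show "Sigma_seq (b - a) \<subseteq> class_flips ` Cpath n a b"
    proof
      fix ks assume "ks \<in> Sigma_seq (b - a)"
      then have "is_path n a b (edge_path a ks)" "class_flips (pcls n a b (edge_path a ks)) = ks"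
        using edge_path_Sigma_seq[OF ab] by auto
      moreover from this have "pcls n a b (edge_path a ks) \<in> Cpath n a b" unfolding Cpath_iff by blast
      ultimately show "ks \<in> class_flips ` Cpath n a b" by (metis image_eqI)
    qed
  qed
qed

lemma leads_iff_bruhat:
  assumes ab: "a \<subseteq> b" "b \<subseteq> {1..n}" and "X \<in> Cpath n a b" "Y \<in> Cpath n a b"
  shows "leads n a b X Y \<longleftrightarrow> bruhat (class_flips X) (class_flips Y)"
proof -
  obtain xs ys where xs: "is_path n a b xs" "X = pcls n a b xs" and ys: "is_path n a b ys" "Y = pcls n a b ys"
    using assms(3,4) unfolding Cpath_iff by blast
  show ?thesis
  proof
    assume "leads n a b X Y"
    then obtain xs' ys' where "xs' \<in> X" "ys' \<in> Y" "(\<lambda>u v. leads1 n a b u v \<or> pathEq n a b u v)\<^sup>*\<^sup>* xs' ys'"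
      unfolding leads_def by blast
    moreover from this have "flips xs' = flips xs" "flips ys' = flips ys"
      using xs(2) ys(2) flips_pcls by blast+
    ultimately show "bruhat (class_flips X) (class_flips Y)"
      using leads_closure_bruhat xs(2) ys(2) by fastforce
  next
    assume "bruhat (class_flips X) (class_flips Y)"
    then have "bruhat (flips xs) (flips ys)" using xs ys by simp
    moreover have "flips xs \<in> Sigma_seq (b - a)" using flips_Sigma_seq xs(1) by (auto simp: is_path_def)
    ultimately have "(\<lambda>u v. leads1 n a b u v \<or> pathEq n a b u v)\<^sup>*\<^sup>* (edge_path a (flips xs)) (edge_path a (flips ys))"
      by (rule bruhat_leads_closure[OF ab])
    moreover have "edge_path a (flips xs) \<in> X" "edge_path a (flips ys) \<in> Y"
      using edge_path_in_pcls ab xs ys by auto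
    ultimately show "leads n a b X Y" unfolding leads_def by blast
  qed
qed

theorem proposition2p14:
  fixes n :: nat
  shows "\<exists>\<Phi> :: nat set \<Rightarrow> nat set \<Rightarrow> (nat set \<Rightarrow> nat set) list set \<Rightarrow> nat list.
     (\<forall>a b. a \<subseteq> b \<and> b \<subseteq> {1..n} \<longrightarrow>
        bij_betw (\<Phi> a b) (Cpath n a b) (Sigma_seq (b - a)) \<and>
        (\<forall>X\<in>Cpath n a b. \<forall>Y\<in>Cpath n a b. leads n a b X Y \<longleftrightarrow> bruhat (\<Phi> a b X) (\<Phi> a b Y))) \<and>
     (\<forall>a b c x y. a \<subseteq> b \<and> b \<subseteq> c \<and> c \<subseteq> {1..n} \<and> is_path n a b x \<and> is_path n b c y \<longrightarrow>
        \<Phi> a c (pcls n a c (x @ y)) = \<Phi> a b (pcls n a b x) @ \<Phi> b c (pcls n b c y)) \<and>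
     (\<forall>a b. a \<subseteq> b \<and> b \<subseteq> {1..n} \<longrightarrow>
        (\<forall>X\<in>Cpath n a b. \<forall>Y\<in>Cpath n a b. leads n a b X Y \<and> leads n a b Y X \<longrightarrow> X = Y))"
proof (intro exI[of _ "\<lambda>_ _. class_flips"] conjI allI impI ballI)
  fix a b assume "a \<subseteq> b \<and> b \<subseteq> {1..n}"
  then show "bij_betw class_flips (Cpath n a b) (Sigma_seq (b - a))"
    by (simp add: class_flips_bij_betw)
next
  fix a b X Y assume "a \<subseteq> b \<and> b \<subseteq> {1..n}" "X \<in> Cpath n a b" "Y \<in> Cpath n a b"
  then show "leads n a b X Y \<longleftrightarrow> bruhat (class_flips X) (class_flips Y)"
    by (simp add: leads_iff_bruhat)
next
  fix a b X Y assume ab: "a \<subseteq> b \<and> b \<subseteq> {1..n}" and XY: "X \<in> Cpath n a b" "Y \<in> Cpath n a b"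
    and "leads n a b X Y \<and> leads n a b Y X"
  then have "class_flips X = class_flips Y"
    using leads_iff_bruhat[of a b n X Y] leads_iff_bruhat[of a b n Y X] bruhat_antisym by blast
  moreover have "inj_on class_flips (Cpath n a b)" using class_flips_bij_betw ab bij_betw_imp_inj_on by blast
  ultimately show "X = Y" using XY inj_onD by metis
next
  fix a b c xs ys
  show "class_flips (pcls n a c (xs @ ys)) = class_flips (pcls n a b xs) @ class_flips (pcls n b c ys)"
    by simp
qed

end
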